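(* Let $T$ be a tree that is not a path, let $\ell$ be a leaf of $T$, let $P_\ell$ be the path branch of $T$ containing $\ell$, let $v$ be the neighbor of $P_\ell$, and let $X \subseteq V(T)$ with $\ell \notin X$. Then \[ \mathcal{F}_{T,-X} = \mathcal{F}_{T,\ell,-X} + \mathcal{F}_{T - P_\ell,\, -(X\cup\{v\})}. \]
   Context: A fort of a graph $G$ is a nonempty set $F\subseteq V(G)$ such that every vertex outside $F$ is adjacent to either zero or at least two vertices of $F$; it is minimal if no proper subset is a fort. For a graph $H$ and a vertex set $A$, $\mathcal{F}_{H,-A}$ is the number of minimal forts of $H$ disjoint from $A$, and $\mathcal{F}_{H,\ell,-A}$ is the number of minimal forts of $H$ that contain $\ell$ and are disjoint from $A$. In a tree $T$, the path branch of a leaf $\ell$ is the maximal connected induced subgraph containing $\ell$ all of whose vertices have degree one or two in $T$; the neighbor of a path branch is the unique vertex not in the branch adjacent to a vertex of the branch (it exists when $T$ is not a path). *)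

theory Defs
  imports Main
begin

text \<open>Subgraphs induced on a
subset W of V are represented by (W, E): adjacency is always restricted to the
current vertex set.\<close>

definition simple_graph :: "'a set \<Rightarrow> ('a \<Rightarrow> 'a \<Rightarrow> bool) \<Rightarrow> bool" where
  "simple_graph V E \<longleftrightarrow> finite V \<and>
     (\<forall>u w. E u w \<longrightarrow> u \<in> V \<and> w \<in> V \<and> u \<noteq> w \<and> E w u)"

definition adj :: "'a set \<Rightarrow> ('a \<Rightarrow> 'a \<Rightarrow> bool) \<Rightarrow> 'a \<Rightarrow> 'a \<Rightarrow> bool" where
  "adj V E u w \<longleftrightarrow> u \<in> V \<and> w \<in> V \<and> E u w"

definition degree :: "'a set \<Rightarrow> ('a \<Rightarrow> 'a \<Rightarrow> bool) \<Rightarrow> 'a \<Rightarrow> nat" where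
  "degree V E u = card {w \<in> V. adj V E u w}"

definition connected_graph :: "'a set \<Rightarrow> ('a \<Rightarrow> 'a \<Rightarrow> bool) \<Rightarrow> bool" where
  "connected_graph V E \<longleftrightarrow> V \<noteq> {} \<and> (\<forall>u\<in>V. \<forall>w\<in>V. (adj V E)\<^sup>*\<^sup>* u w)"

definition is_cycle :: "'a set \<Rightarrow> ('a \<Rightarrow> 'a \<Rightarrow> bool) \<Rightarrow> 'a list \<Rightarrow> bool" where
  "is_cycle V E cs \<longleftrightarrow> length cs \<ge> 3 \<and> distinct cs \<and> set cs \<subseteq> V \<and>
     (\<forall>i. Suc i < length cs \<longrightarrow> adj V E (cs ! i) (cs ! Suc i)) \<and>
     adj V E (last cs) (hd cs)"

definition tree :: "'a set \<Rightarrow> ('a \<Rightarrow> 'a \<Rightarrow> bool) \<Rightarrow> bool" where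
  "tree V E \<longleftrightarrow> simple_graph V E \<and> connected_graph V E \<and> (\<nexists>cs. is_cycle V E cs)"

definition path_graph :: "'a set \<Rightarrow> ('a \<Rightarrow> 'a \<Rightarrow> bool) \<Rightarrow> bool" where
  "path_graph V E \<longleftrightarrow> tree V E \<and> (\<forall>u\<in>V. degree V E u \<le> 2)"

definition leaf :: "'a set \<Rightarrow> ('a \<Rightarrow> 'a \<Rightarrow> bool) \<Rightarrow> 'a \<Rightarrow> bool" where
  "leaf V E u \<longleftrightarrow> u \<in> V \<and> degree V E u = 1"

definition fort :: "'a set \<Rightarrow> ('a \<Rightarrow> 'a \<Rightarrow> bool) \<Rightarrow> 'a set \<Rightarrow> bool" where
  "fort V E F \<longleftrightarrow> F \<noteq> {} \<and> F \<subseteq> V \<and>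
     (\<forall>u \<in> V - F. card {w \<in> F. adj V E u w} \<noteq> 1)"

definition minimal_fort :: "'a set \<Rightarrow> ('a \<Rightarrow> 'a \<Rightarrow> bool) \<Rightarrow> 'a set \<Rightarrow> bool" where
  "minimal_fort V E F \<longleftrightarrow> fort V E F \<and> (\<forall>F'. F' \<subset> F \<longrightarrow> \<not> fort V E F')"

definition nforts_avoid :: "'a set \<Rightarrow> ('a \<Rightarrow> 'a \<Rightarrow> bool) \<Rightarrow> 'a set \<Rightarrow> nat" where
  "nforts_avoid V E A = card {F. minimal_fort V E F \<and> F \<inter> A = {}}"

definition nforts_with_avoid :: "'a set \<Rightarrow> ('a \<Rightarrow> 'a \<Rightarrow> bool) \<Rightarrow> 'a \<Rightarrow> 'a set \<Rightarrow> nat" where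
  "nforts_with_avoid V E l A = card {F. minimal_fort V E F \<and> l \<in> F \<and> F \<inter> A = {}}"

definition branch_candidate :: "'a set \<Rightarrow> ('a \<Rightarrow> 'a \<Rightarrow> bool) \<Rightarrow> 'a \<Rightarrow> 'a set \<Rightarrow> bool" where
  "branch_candidate V E l P \<longleftrightarrow> l \<in> P \<and> P \<subseteq> V \<and> connected_graph P E \<and>
     (\<forall>u\<in>P. degree V E u = 1 \<or> degree V E u = 2)"

definition path_branch :: "'a set \<Rightarrow> ('a \<Rightarrow> 'a \<Rightarrow> bool) \<Rightarrow> 'a \<Rightarrow> 'a set \<Rightarrow> bool" where
  "path_branch V E l P \<longleftrightarrow> leaf V E l \<and> branch_candidate V E l P \<and>
     (\<forall>Q. branch_candidate V E l Q \<and> P \<subseteq> Q \<longrightarrow> Q = P)"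

definition branch_neighbor :: "'a set \<Rightarrow> ('a \<Rightarrow> 'a \<Rightarrow> bool) \<Rightarrow> 'a set \<Rightarrow> 'a \<Rightarrow> bool" where
  "branch_neighbor V E P v \<longleftrightarrow> v \<in> V - P \<and> (\<exists>p\<in>P. adj V E v p) \<and>
     (\<forall>w \<in> V - P. (\<exists>p\<in>P. adj V E w p) \<longrightarrow> w = v)"

end

theory Submission
  imports Defs
begin

text \<open>A fort missing the leaf l misses the whole path branch P: walking from l along P,
each vertex has degree at most 2 and already one neighbour outside the fort (its predecessor;
for l, its only neighbour is the next vertex), so it cannot have two neighbours in the fort,
hence has none. The vertex of P adjacent to the branch neighbour v then shows v is not in the
fort either. Conversely a fort of T - P avoiding v has no neighbour in P, so it is a fort of T.
Thus minimal forts of T avoiding X and l are exactly the minimal forts of T - P avoiding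
X and v.\<close>

lemma card_le_degree:
  assumes "finite V" and "S \<subseteq> {w. adj V E u w}"
  shows "card S \<le> degree V E u"
  unfolding degree_def
  using assms by (intro card_mono) (auto simp: adj_def)

lemma fort_second_neighbor:
  assumes "fort V E F" and "u \<in> V - F" and "adj V E u w" and "w \<in> F"
  obtains w' where "adj V E u w'" and "w' \<in> F" and "w' \<noteq> w"
proof -
  have "{w \<in> F. adj V E u w} \<noteq> {w}"
  proof
    assume "{w \<in> F. adj V E u w} = {w}"
    then have "card {w \<in> F. adj V E u w} = 1" by simp
    then show False using assms(1,2) unfolding fort_def by blast
  qed
  with assms(3,4) show thesis using that by blast
qed

lemma fort_induced_subgraph:
  assumes "fort V E F" and "F \<subseteq> W" and "W \<subseteq> V"
  shows "fort W E F"
proof -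
  have "{w \<in> F. adj W E u w} = {w \<in> F. adj V E u w}" if "u \<in> W" for u
    using that assms(2,3) unfolding adj_def by blast
  then show ?thesis using assms unfolding fort_def by auto
qed

lemma fort_extend:
  assumes "fort W E F" and "W \<subseteq> V"
    and no_adj: "\<And>u w. u \<in> V - W \<Longrightarrow> w \<in> F \<Longrightarrow> \<not> adj V E u w"
  shows "fort V E F"
proof -
  have FW: "F \<subseteq> W" using assms(1) by (simp add: fort_def)
  have "card {w \<in> F. adj V E u w} \<noteq> 1" if u: "u \<in> V - F" for u
  proof (cases "u \<in> W")
    case True
    then have "{w \<in> F. adj V E u w} = {w \<in> F. adj W E u w}"
      using FW assms(2) unfolding adj_def by blast
    then show ?thesis using assms(1) True u unfolding fort_def by auto
  next
    case False
    then have "{w \<in> F. adj V E u w} = {}" using no_adj u by blast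
    then show ?thesis by (metis card.empty zero_neq_one)
  qed
  then show ?thesis using assms(1,2) unfolding fort_def by auto
qed

lemma fort_avoids_walk_from_leaf:
  assumes fin: "finite V" and sym: "\<And>u w. E u w \<Longrightarrow> E w u"
    and leaf: "leaf V E l" and PV: "P \<subseteq> V"
    and deg: "\<forall>u\<in>P. degree V E u \<le> 2"
    and fort: "fort V E F" and lF: "l \<notin> F"
    and walk: "(adj P E)\<^sup>*\<^sup>* l x"
  shows "x \<notin> F \<and> (x \<noteq> l \<longrightarrow> (\<exists>y. adj V E x y \<and> y \<notin> F))"
  using walk
proof (induction rule: rtranclp_induct)
  case base
  then show ?case using lF by simp
next
  case (step y z)
  have yF: "y \<notin> F" using step.IH by blast
  have yz: "adj V E y z" and yP: "y \<in> P"
    using step.hyps(2) PV by (auto simp: adj_def)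
  have zF: "z \<notin> F"
  proof
    assume "z \<in> F"
    moreover have "y \<in> V - F" using yP PV yF by auto
    ultimately obtain z' where yz': "adj V E y z'" "z' \<in> F" "z' \<noteq> z"
      using fort_second_neighbor[OF fort _ yz] by blast
    show False
    proof (cases "y = l")
      case True
      have "card {z, z'} \<le> degree V E y"
        using yz yz' by (intro card_le_degree[OF fin]) auto
      then show False using True leaf yz'(3) by (simp add: leaf_def)
    next
      case False
      then obtain w where "adj V E y w" "w \<notin> F" using step.IH by blast
      then have "card {w, z, z'} \<le> degree V E y"
        using yz yz' by (intro card_le_degree[OF fin]) auto
      moreover have "card {w, z, z'} = 3"
        using \<open>w \<notin> F\<close> \<open>z \<in> F\<close> yz' by (auto simp: card_insert_if)
      ultimately show False using deg yP by fastforce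
    qed
  qed
  have "adj V E z y" using yz sym by (auto simp: adj_def)
  then show ?case using zF yF by blast
qed

lemma fort_avoids_branch:
  assumes fin: "finite V" and sym: "\<And>u w. E u w \<Longrightarrow> E w u"
    and leaf: "leaf V E l" and branch: "branch_candidate V E l P"
    and fort: "fort V E F" and lF: "l \<notin> F"
  shows "F \<inter> P = {}"
proof -
  have "(adj P E)\<^sup>*\<^sup>* l x" if "x \<in> P" for x
    using branch that unfolding branch_candidate_def connected_graph_def by auto
  moreover have "P \<subseteq> V" and "\<forall>u\<in>P. degree V E u \<le> 2"
    using branch unfolding branch_candidate_def by auto
  ultimately show ?thesis
    using fort_avoids_walk_from_leaf[OF fin sym leaf _ _ fort lF] by blast
qed

lemma fort_avoids_branch_neighbor:
  assumes sym: "\<And>u w. E u w \<Longrightarrow> E w u"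
    and nbr: "branch_neighbor V E P v"
    and fort: "fort V E F" and FP: "F \<inter> P = {}"
  shows "v \<notin> F"
proof
  assume vF: "v \<in> F"
  obtain p where p: "p \<in> P" "adj V E v p" using nbr unfolding branch_neighbor_def by auto
  have "adj V E p v" using p(2) sym by (auto simp: adj_def)
  moreover have "p \<in> V - F" using p FP by (auto simp: adj_def)
  ultimately obtain w where "adj V E p w" "w \<in> F" "w \<noteq> v"
    using fort_second_neighbor[OF fort _ _ vF] by blast
  moreover from this have "w \<in> V - P" and "adj V E w p"
    using FP sym by (auto simp: adj_def)
  ultimately show False using nbr p(1) unfolding branch_neighbor_def by blast
qed

lemma fort_avoiding_leaf_iff:
  assumes fin: "finite V" and sym: "\<And>u w. E u w \<Longrightarrow> E w u"
    and leaf: "leaf V E l" and branch: "branch_candidate V E l P"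
    and nbr: "branch_neighbor V E P v"
  shows "fort V E F \<and> l \<notin> F \<longleftrightarrow> fort (V - P) E F \<and> v \<notin> F"
proof
  assume F: "fort V E F \<and> l \<notin> F"
  then have FP: "F \<inter> P = {}"
    using fort_avoids_branch[OF fin sym leaf branch] by blast
  have "F \<subseteq> V - P" using F FP by (auto simp: fort_def)
  then have "fort (V - P) E F"
    by (rule fort_induced_subgraph[OF conjunct1[OF F] _ Diff_subset])
  then show "fort (V - P) E F \<and> v \<notin> F"
    using fort_avoids_branch_neighbor[OF sym nbr _ FP] F by blast
next
  assume F: "fort (V - P) E F \<and> v \<notin> F"
  then have FVP: "F \<subseteq> V - P" by (simp add: fort_def)
  have no_adj: "\<not> adj V E u w" if "u \<in> P" "w \<in> F" for u w
  proof
    assume "adj V E u w"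
    then have "adj V E w u" using sym by (auto simp: adj_def)
    moreover have "w \<in> V - P" using FVP that(2) by blast
    ultimately have "w = v" using nbr that(1) unfolding branch_neighbor_def by blast
    then show False using F that(2) by blast
  qed
  have "fort V E F"
    by (rule fort_extend[OF conjunct1[OF F] Diff_subset]) (simp add: no_adj)
  moreover have "l \<notin> F" using FVP branch by (auto simp: branch_candidate_def)
  ultimately show "fort V E F \<and> l \<notin> F" by blast
qed

lemma minimal_fort_avoiding_iff:
  assumes "\<And>F. fort V E F \<and> a \<notin> F \<longleftrightarrow> fort W E F \<and> b \<notin> F"
  shows "minimal_fort V E F \<and> a \<notin> F \<longleftrightarrow> minimal_fort W E F \<and> b \<notin> F"
  using assms unfolding minimal_fort_def by (metis psubsetD)

lemma nforts_avoid_split: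
  assumes "finite V"
  shows "nforts_avoid V E X =
    nforts_with_avoid V E l X + card {F. minimal_fort V E F \<and> F \<inter> insert l X = {}}"
proof -
  let ?with = "{F. minimal_fort V E F \<and> l \<in> F \<and> F \<inter> X = {}}"
  let ?without = "{F. minimal_fort V E F \<and> F \<inter> insert l X = {}}"
  have "finite {F. minimal_fort V E F}"
    by (rule finite_subset[of _ "Pow V"]) (auto simp: minimal_fort_def fort_def assms)
  then have "finite ?with" "finite ?without"
    by (auto elim: rev_finite_subset)
  moreover have "{F. minimal_fort V E F \<and> F \<inter> X = {}} = ?with \<union> ?without" by auto
  ultimately show ?thesis
    unfolding nforts_avoid_def nforts_with_avoid_def by (simp add: card_Un_disjoint disjoint_iff)
qed

theorem mainTheorem12:
  fixes V :: "'a set" and E :: "'a \<Rightarrow> 'a \<Rightarrow> bool" and l v :: 'a and P X :: "'a set"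
  assumes "tree V E"
    and "\<not> path_graph V E"
    and "leaf V E l"
    and "path_branch V E l P"
    and "branch_neighbor V E P v"
    and "X \<subseteq> V"
    and "l \<notin> X"
  shows "nforts_avoid V E X = nforts_with_avoid V E l X + nforts_avoid (V - P) E (X \<union> {v})"
proof -
  have fin: "finite V" and sym: "\<And>u w. E u w \<Longrightarrow> E w u"
    using assms(1) unfolding tree_def simple_graph_def by auto
  have branch: "branch_candidate V E l P"
    using assms(4) by (simp add: path_branch_def)
  have "minimal_fort V E F \<and> l \<notin> F \<longleftrightarrow> minimal_fort (V - P) E F \<and> v \<notin> F" for F
    by (rule minimal_fort_avoiding_iff fort_avoiding_leaf_iff[OF fin sym assms(3) branch assms(5)])+
  then have "{F. minimal_fort V E F \<and> F \<inter> insert l X = {}} =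
      {F. minimal_fort (V - P) E F \<and> F \<inter> (X \<union> {v}) = {}}"
    by blast
  then show ?thesis
    using nforts_avoid_split[OF fin, of E X l] by (simp add: nforts_avoid_def)
qed

end
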